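(* Let $\mu, t \in \mathbb{R}$ and $\sigma > 0$. Let $\mathcal{L}_S(\mu,\sigma)$ be the set of all probability distributions $F$ on $\mathbb{R}$ such that, for $X \sim F$, $\mathbb{E}^F[X]=\mu$, $\mathbb{E}^F[X^2]=\mu^2+\sigma^2$, and $F$ is symmetric. Then \[ \sup_{F \in \mathcal{L}_{S}(\mu, \sigma)}\mathbb{E}^{F}[(X-t)_{+}^2]= \begin{cases} \sigma^2 + (t-\mu)^2, & t \le \mu-\sigma,\\ \frac{1}{2}(\mu- t+\sigma)^2, & \mu-\sigma < t\leq \mu,\\ \frac{\sigma^2}{2}, & t > \mu. \end{cases} \]
   Context: For $x\in\mathbb{R}$, $(x)_+=\max\{x,0\}$. A distribution $F$ of a random variable $X$ is called symmetric if there exists a constant $a\in\mathbb{R}$ such that $\mathbb{P}(X-a>x)=\mathbb{P}(X-a<-x)$ for all $x\in\mathbb{R}$ under $F$. $\mathbb{E}^F$ denotes expectation when $X$ has distribution $F$. *)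

theory Defs
  imports "HOL-Probability.Probability"
begin

text \<open>A distribution F on the reals is represented as a probability measure on the
  Borel sets of the reals; X is the identity random variable.\<close>

definition symmetric_distr :: "real measure \<Rightarrow> bool" where
  "symmetric_distr F \<longleftrightarrow>
     (\<exists>a::real. \<forall>x::real. measure F {y. y - a > x} = measure F {y. y - a < - x})"

definition L_S :: "real \<Rightarrow> real \<Rightarrow> real measure set" where
  "L_S \<mu> \<sigma> = {F. prob_space F \<and> sets F = sets borel
      \<and> integrable F (\<lambda>x. x) \<and> integral\<^sup>L F (\<lambda>x. x) = \<mu>
      \<and> integrable F (\<lambda>x. x ^ 2) \<and> integral\<^sup>L F (\<lambda>x. x ^ 2) = \<mu>^2 + \<sigma>^2
      \<and> symmetric_distr F}"

definition pos_part :: "real \<Rightarrow> real" where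
  "pos_part x = max x 0"

end

theory Submission
  imports Defs "HOL-Real_Asymp.Real_Asymp"
begin

(*
  A symmetric law with mean \<mu> is invariant under the reflection x \<mapsto> 2\<mu> - x, so
  E f(X) = E [(f(X) + f(2\<mu> - X)) / 2].  With u = X - \<mu> and s = \<mu> - t the symmetrized
  integrand ((s + u)\<^sub>+\<^sup>2 + (s - u)\<^sub>+\<^sup>2) / 2 lies below a quadratic c0 + c2 u\<^sup>2, whose
  expectation is c0 + c2 \<sigma>\<^sup>2 by the moment constraints.  For t \<le> \<mu> the quadratic can
  be chosen to touch the integrand at u = \<plusminus>\<sigma>, so the bound is attained by the two-point
  law at \<mu> \<plusminus> \<sigma>.  For t > \<mu> the best quadratic is u\<^sup>2 / 2, which is touched only as
  u \<rightarrow> \<infinity>; the bound \<sigma>\<^sup>2 / 2 is then approached, but not attained, by the laws with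
  mass \<sigma>\<^sup>2 / (2 d\<^sup>2) at \<mu> \<plusminus> d and the rest at \<mu>, as d \<rightarrow> \<infinity>.
*)

lemma symmetric_distr_imp_reflection_invariant:
  assumes "symmetric_distr F" "real_distribution F"
  obtains a where "distr F borel (\<lambda>y. 2 * a - y) = F"
proof -
  interpret real_distribution F by fact
  from assms(1) obtain a where sym: "\<And>x. measure F {y. y - a > x} = measure F {y. y - a < - x}"
    unfolding symmetric_distr_def by blast
  let ?G = "distr F borel (\<lambda>y. 2 * a - y)"
  have "cdf ?G c = cdf F c" for c
  proof -
    have "cdf ?G c = measure F (UNIV - {y. y - a < - (c - a)})"
      unfolding cdf_def2 by (subst measure_distr) (auto intro!: arg_cong[where f = "measure F"])
    also have "\<dots> = 1 - measure F {y. y - a > c - a}"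
      using prob_compl[of "{y. y - a < - (c - a)}"] sym[of "c - a"] by simp
    also have "\<dots> = measure F {..c}"
      using prob_compl[of "{..c}"] by (simp add: Compl_eq_Diff_UNIV[symmetric] not_le greaterThan_def)
    finally show ?thesis by (simp add: cdf_def2)
  qed
  then have "?G = F"
    by (intro cdf_unique ext real_distribution_distr) (auto simp: real_distribution_axioms)
  then show thesis by (rule that)
qed

lemma L_S_real_distribution: "F \<in> L_S \<mu> \<sigma> \<Longrightarrow> real_distribution F"
  by (auto simp: L_S_def real_distribution_def real_distribution_axioms_def)

lemma L_S_reflection_invariant:
  assumes "F \<in> L_S \<mu> \<sigma>"
  shows "distr F borel (\<lambda>y. 2 * \<mu> - y) = F"
proof -
  interpret real_distribution F using assms by (rule L_S_real_distribution)
  have int: "integrable F (\<lambda>x. x)" and mean: "integral\<^sup>L F (\<lambda>x. x) = \<mu>"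
    using assms by (auto simp: L_S_def)
  obtain a where a: "distr F borel (\<lambda>y. 2 * a - y) = F"
    using assms real_distribution_axioms symmetric_distr_imp_reflection_invariant
    unfolding L_S_def by blast
  have "\<mu> = integral\<^sup>L (distr F borel (\<lambda>y. 2 * a - y)) (\<lambda>x. x)"
    using a mean by simp
  also have "\<dots> = integral\<^sup>L F (\<lambda>x. 2 * a - x)"
    by (rule integral_distr) auto
  also have "\<dots> = 2 * a - \<mu>"
    using int mean prob_space by simp
  finally have "a = \<mu>"
    by linarith
  with a show ?thesis
    by simp
qed

lemma has_bochner_integral_L_S_quadratic:
  assumes "F \<in> L_S \<mu> \<sigma>"
  shows "has_bochner_integral F (\<lambda>x. c0 + c2 * (x - \<mu>)^2) (c0 + c2 * \<sigma>^2)"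
proof -
  interpret real_distribution F using assms by (rule L_S_real_distribution)
  have int: "integrable F (\<lambda>x. x)" "integrable F (\<lambda>x. x^2)"
    and moments: "integral\<^sup>L F (\<lambda>x. x) = \<mu>" "integral\<^sup>L F (\<lambda>x. x^2) = \<mu>^2 + \<sigma>^2"
    using assms by (auto simp: L_S_def)
  have expand: "(\<lambda>x. c0 + c2 * (x - \<mu>)^2) = (\<lambda>x. (c0 + c2 * \<mu>^2) + (c2 * x^2 - 2 * c2 * \<mu> * x))"
    by (auto simp: power2_diff algebra_simps)
  have "integral\<^sup>L F (\<lambda>x. (c0 + c2 * \<mu>^2) + (c2 * x^2 - 2 * c2 * \<mu> * x))
      = (c0 + c2 * \<mu>^2) + (c2 * (\<mu>^2 + \<sigma>^2) - 2 * c2 * \<mu> * \<mu>)"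
    using int moments prob_space by simp
  also have "\<dots> = c0 + c2 * \<sigma>^2"
    by (simp add: power2_eq_square algebra_simps)
  finally show ?thesis
    using int unfolding expand by (simp add: has_bochner_integral_iff)
qed

lemma integral_L_S_le_quadratic:
  fixes f :: "real \<Rightarrow> real"
  assumes F: "F \<in> L_S \<mu> \<sigma>" and f: "f \<in> borel_measurable borel" "\<And>x. 0 \<le> f x"
    and symmetrized_le: "\<And>x. f x + f (2 * \<mu> - x) \<le> 2 * (c0 + c2 * (x - \<mu>)^2)"
  shows "integral\<^sup>L F f \<le> c0 + c2 * \<sigma>^2"
proof -
  interpret real_distribution F using F by (rule L_S_real_distribution)
  let ?q = "\<lambda>x. c0 + c2 * (x - \<mu>)^2"
  have q: "integrable F ?q" "integral\<^sup>L F ?q = c0 + c2 * \<sigma>^2"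
    using has_bochner_integral_L_S_quadratic[OF F] by (auto simp: has_bochner_integral_iff)
  have q2: "integrable F (\<lambda>x. 2 * ?q x)"
    using q(1) by (rule integrable_mult_right)
  have dominated: "norm (f x) \<le> norm (2 * ?q x)" "norm (f (2 * \<mu> - x)) \<le> norm (2 * ?q x)" for x
    using symmetrized_le[of x] f(2)[of x] f(2)[of "2 * \<mu> - x"] abs_ge_self[of "2 * ?q x"]
    unfolding real_norm_def by linarith+
  have int: "integrable F f" "integrable F (\<lambda>x. f (2 * \<mu> - x))"
    using f(1) dominated by (auto intro!: Bochner_Integration.integrable_bound[OF q2] AE_I2)
  have "integral\<^sup>L F f = integral\<^sup>L (distr F borel (\<lambda>y. 2 * \<mu> - y)) f"
    using L_S_reflection_invariant[OF F] by simp
  also have "\<dots> = integral\<^sup>L F (\<lambda>x. f (2 * \<mu> - x))"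
    using f by (intro integral_distr) auto
  finally have "2 * integral\<^sup>L F f = integral\<^sup>L F (\<lambda>x. f x + f (2 * \<mu> - x))"
    using int by simp
  also have "\<dots> \<le> integral\<^sup>L F (\<lambda>x. 2 * ?q x)"
    using int q2 by (intro integral_mono symmetrized_le Bochner_Integration.integrable_add)
  also have "\<dots> = 2 * (c0 + c2 * \<sigma>^2)"
    using q(2) by (simp only: integral_mult_right_zero)
  finally show ?thesis
    by simp
qed

definition three_point :: "real \<Rightarrow> real \<Rightarrow> real \<Rightarrow> real measure" where
  "three_point m d p =
     distr (measure_pmf (pmf_of_list [(m - d, p / 2), (m, 1 - p), (m + d, p / 2)])) borel (\<lambda>x. x)"

lemma pmf_of_list_wf_three_point:
  fixes m d p :: real
  shows "0 \<le> p \<Longrightarrow> p \<le> 1 \<Longrightarrow> pmf_of_list_wf [(m - d, p / 2), (m, 1 - p), (m + d, p / 2)]"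
  by (auto intro!: pmf_of_list_wfI)

lemma real_distribution_three_point: "real_distribution (three_point m d p)"
  unfolding three_point_def
  by (auto intro!: real_distribution.intro prob_space.prob_space_distr
      simp: prob_space_measure_pmf real_distribution_axioms_def)

lemma measure_three_point:
  assumes "0 \<le> p" "p \<le> 1" "A \<in> sets borel"
  shows "measure (three_point m d p) A =
    p / 2 * indicator A (m - d) + (1 - p) * indicator A m + p / 2 * indicator A (m + d)"
  using assms
  by (simp add: three_point_def measure_distr measure_pmf_of_list[OF pmf_of_list_wf_three_point] indicator_def)

lemma has_bochner_integral_three_point:
  fixes g :: "real \<Rightarrow> real"
  assumes "0 < d" "0 \<le> p" "p \<le> 1" "g \<in> borel_measurable borel"
  shows "has_bochner_integral (three_point m d p) g
    (p / 2 * g (m - d) + (1 - p) * g m + p / 2 * g (m + d))"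
proof -
  let ?P = "pmf_of_list [(m - d, p / 2), (m, 1 - p), (m + d, p / 2)]"
  have support: "set_pmf ?P \<subseteq> {m - d, m, m + d}"
    using set_pmf_of_list[OF pmf_of_list_wf_three_point[OF assms(2,3)]] by simp
  have "integrable ?P g"
    using support by (intro integrable_measure_pmf_finite) (auto intro: finite_subset)
  moreover have "integral\<^sup>L ?P g = (\<Sum>a\<in>{m - d, m, m + d}. g a * pmf ?P a)"
    using support by (intro integral_measure_pmf_real) auto
  moreover have pmf_P: "pmf ?P (m - d) = p / 2" "pmf ?P m = 1 - p" "pmf ?P (m + d) = p / 2"
    using assms by (simp_all add: pmf_pmf_of_list[OF pmf_of_list_wf_three_point[OF assms(2,3)]])
  have "(\<Sum>a\<in>{m - d, m, m + d}. g a * pmf ?P a)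
      = p / 2 * g (m - d) + (1 - p) * g m + p / 2 * g (m + d)"
    using assms(1) by (simp add: pmf_P) (simp add: algebra_simps)
  ultimately show ?thesis
    using assms(4) unfolding three_point_def
    by (simp add: has_bochner_integral_iff integrable_distr_eq integral_distr)
qed

lemma three_point_in_L_S:
  assumes "0 < d" "0 \<le> p" "p \<le> 1" "p * d^2 = \<sigma>^2"
  shows "three_point m d p \<in> L_S m \<sigma>"
proof -
  have "symmetric_distr (three_point m d p)"
    unfolding symmetric_distr_def
    using assms(2,3) by (intro exI[of _ m] allI) (simp add: measure_three_point indicator_def)
  moreover have "p / 2 * (m - d) + (1 - p) * m + p / 2 * (m + d) = m"
    by (simp add: field_simps)
  then have "has_bochner_integral (three_point m d p) (\<lambda>x. x) m"
    using has_bochner_integral_three_point[OF assms(1-3), where m = m and g = "\<lambda>x. x"] by simp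
  moreover have "p / 2 * (m - d)^2 + (1 - p) * m^2 + p / 2 * (m + d)^2 = m^2 + \<sigma>^2"
    using assms(4) by (simp add: power2_eq_square field_simps)
  then have "has_bochner_integral (three_point m d p) (\<lambda>x. x^2) (m^2 + \<sigma>^2)"
    using has_bochner_integral_three_point[OF assms(1-3), where m = m and g = "\<lambda>x. x^2"] by simp
  ultimately show ?thesis
    using real_distribution_three_point[of m d p]
    by (auto simp: L_S_def has_bochner_integral_iff real_distribution_def real_distribution_axioms_def)
qed

lemma pos_part_sq_le_sq: "pos_part x ^ 2 \<le> x ^ 2"
  by (simp add: pos_part_def max_def)

lemma pos_part_sq_le_sq_of_le: "x \<le> y \<Longrightarrow> 0 \<le> y \<Longrightarrow> pos_part x ^ 2 \<le> y ^ 2"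
  by (auto simp: pos_part_def intro!: power_mono)

lemma pos_part_sq_pair_le: "pos_part (s + u)^2 + pos_part (s - u)^2 \<le> 2 * (s^2 + u^2)"
  using pos_part_sq_le_sq[of "s + u"] pos_part_sq_le_sq[of "s - u"]
  by (simp add: power2_eq_square algebra_simps)

lemma pos_part_sq_pair_le_of_nonneg_le:
  assumes "0 \<le> s" "s \<le> \<sigma>"
  shows "\<sigma> * (pos_part (s + u)^2 + pos_part (s - u)^2) \<le> (\<sigma> + s) * (\<sigma> * s + u^2)"
proof -
  consider "s \<le> u" | "u \<le> - s" | "\<bar>u\<bar> \<le> s"
    by linarith
  then show ?thesis
  proof cases
    case 1
    then have eq: "pos_part (s + u)^2 + pos_part (s - u)^2 = (s + u)^2"
      using assms by (simp add: pos_part_def)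
    have "0 \<le> s * (\<sigma> - u)^2"
      using assms by simp
    then show ?thesis
      unfolding eq
      by (simp add: power2_eq_square algebra_simps)
  next
    case 2
    then have eq: "pos_part (s + u)^2 + pos_part (s - u)^2 = (s - u)^2"
      using assms by (simp add: pos_part_def)
    have "0 \<le> s * (\<sigma> + u)^2"
      using assms by simp
    then show ?thesis
      unfolding eq
      by (simp add: power2_eq_square algebra_simps)
  next
    case 3
    then have eq: "pos_part (s + u)^2 + pos_part (s - u)^2 = (s + u)^2 + (s - u)^2"
      by (simp add: pos_part_def abs_le_iff)
    have "u^2 \<le> \<sigma> * s"
      using 3 assms abs_le_square_iff[of u s] mult_right_mono[OF assms(2) assms(1)]
      by (simp add: power2_eq_square)
    then have "0 \<le> (\<sigma> - s) * (\<sigma> * s - u^2)"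
      using assms by simp
    then show ?thesis
      unfolding eq
      by (simp add: power2_eq_square algebra_simps)
  qed
qed

lemma pos_part_sq_pair_le_of_nonpos:
  assumes "s \<le> 0"
  shows "pos_part (s + u)^2 + pos_part (s - u)^2 \<le> u^2"
proof (cases "0 \<le> u")
  case True
  have "pos_part (s + u)^2 \<le> u^2"
    using assms True by (intro pos_part_sq_le_sq_of_le) auto
  moreover have "pos_part (s - u) = 0"
    using assms True by (simp add: pos_part_def)
  ultimately show ?thesis
    by simp
next
  case False
  have "pos_part (s - u)^2 \<le> (- u)^2"
    using assms False by (intro pos_part_sq_le_sq_of_le) auto
  moreover have "pos_part (s + u) = 0"
    using assms False by (simp add: pos_part_def)
  ultimately show ?thesis
    by simp
qed

definition sq_excess_sup :: "real \<Rightarrow> real \<Rightarrow> real \<Rightarrow> real" where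
  "sq_excess_sup \<mu> \<sigma> t =
    (if t \<le> \<mu> - \<sigma> then \<sigma>^2 + (t - \<mu>)^2
     else if t \<le> \<mu> then (\<mu> - t + \<sigma>)^2 / 2
     else \<sigma>^2 / 2)"

lemma integral_pos_part_sq_le_sq_excess_sup:
  assumes F: "F \<in> L_S \<mu> \<sigma>" and "0 < \<sigma>"
  shows "integral\<^sup>L F (\<lambda>x. pos_part (x - t)^2) \<le> sq_excess_sup \<mu> \<sigma> t"
proof -
  define s where "s = \<mu> - t"
  let ?f = "\<lambda>x. pos_part (x - t)^2"
  have f: "?f \<in> borel_measurable borel" "\<And>x. 0 \<le> ?f x"
    unfolding pos_part_def by auto
  have pair: "?f x + ?f (2 * \<mu> - x) = pos_part (s + (x - \<mu>))^2 + pos_part (s - (x - \<mu>))^2" for x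
    by (simp add: s_def algebra_simps)
  consider "t \<le> \<mu> - \<sigma>" | "\<mu> - \<sigma> < t" "t \<le> \<mu>" | "\<mu> < t"
    by linarith
  then show ?thesis
  proof cases
    case 1
    have "integral\<^sup>L F ?f \<le> s^2 + 1 * \<sigma>^2"
    proof (rule integral_L_S_le_quadratic[OF F f])
      show "?f x + ?f (2 * \<mu> - x) \<le> 2 * (s^2 + 1 * (x - \<mu>)^2)" for x
        unfolding pair using pos_part_sq_pair_le by simp
    qed
    with 1 show ?thesis
      by (simp add: sq_excess_sup_def s_def power2_commute)
  next
    case 2
    then have s: "0 \<le> s" "s \<le> \<sigma>"
      by (auto simp: s_def)
    have "integral\<^sup>L F ?f \<le> (\<sigma> + s) * s / 2 + (\<sigma> + s) / (2 * \<sigma>) * \<sigma>^2"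
    proof (rule integral_L_S_le_quadratic[OF F f])
      fix x
      have "\<sigma> * (?f x + ?f (2 * \<mu> - x)) \<le> (\<sigma> + s) * (\<sigma> * s + (x - \<mu>)^2)"
        unfolding pair by (rule pos_part_sq_pair_le_of_nonneg_le[OF s])
      then have "?f x + ?f (2 * \<mu> - x) \<le> (\<sigma> + s) * (\<sigma> * s + (x - \<mu>)^2) / \<sigma>"
        using \<open>0 < \<sigma>\<close> by (simp add: le_divide_eq mult.commute)
      also have "\<dots> = 2 * ((\<sigma> + s) * s / 2 + (\<sigma> + s) / (2 * \<sigma>) * (x - \<mu>)^2)"
        using \<open>0 < \<sigma>\<close> by (simp add: field_simps)
      finally show "?f x + ?f (2 * \<mu> - x) \<le> \<dots>" .
    qed
    also have "\<dots> = (\<mu> - t + \<sigma>)^2 / 2"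
      using \<open>0 < \<sigma>\<close> by (simp add: s_def field_simps power2_eq_square)
    finally show ?thesis
      using 2 by (simp add: sq_excess_sup_def)
  next
    case 3
    then have "s \<le> 0"
      by (simp add: s_def)
    have "integral\<^sup>L F ?f \<le> 0 + 1 / 2 * \<sigma>^2"
    proof (rule integral_L_S_le_quadratic[OF F f])
      show "?f x + ?f (2 * \<mu> - x) \<le> 2 * (0 + 1 / 2 * (x - \<mu>)^2)" for x
        unfolding pair using pos_part_sq_pair_le_of_nonpos[OF \<open>s \<le> 0\<close>] by simp
    qed
    with 3 \<open>0 < \<sigma>\<close> show ?thesis
      by (simp add: sq_excess_sup_def)
  qed
qed

lemma integral_pos_part_sq_two_point:
  assumes "0 < \<sigma>" "t \<le> \<mu>"
  shows "integral\<^sup>L (three_point \<mu> \<sigma> 1) (\<lambda>x. pos_part (x - t)^2) = sq_excess_sup \<mu> \<sigma> t"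
proof -
  have "integral\<^sup>L (three_point \<mu> \<sigma> 1) (\<lambda>x. pos_part (x - t)^2)
      = (pos_part (\<mu> - \<sigma> - t)^2 + pos_part (\<mu> + \<sigma> - t)^2) / 2"
    using has_bochner_integral_three_point[OF assms(1), of 1 "\<lambda>x. pos_part (x - t)^2" \<mu>]
    by (simp add: has_bochner_integral_iff pos_part_def)
  also have "\<dots> = sq_excess_sup \<mu> \<sigma> t"
  proof (cases "t \<le> \<mu> - \<sigma>")
    case True
    with assms show ?thesis
      by (simp add: sq_excess_sup_def pos_part_def max_def power2_eq_square field_simps)
  next
    case False
    then show ?thesis
      using assms by (simp add: sq_excess_sup_def pos_part_def max_def add.commute diff_add_eq)
  qed
  finally show ?thesis .
qed

lemma integral_pos_part_sq_three_point_tendsto: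
  assumes "0 < \<sigma>" "\<mu> < t"
  shows "((\<lambda>d. integral\<^sup>L (three_point \<mu> d (\<sigma>^2 / d^2)) (\<lambda>x. pos_part (x - t)^2))
    \<longlongrightarrow> sq_excess_sup \<mu> \<sigma> t) at_top"
proof -
  have lim: "((\<lambda>d. \<sigma>^2 / 2 * ((d - (t - \<mu>)) / d)^2) \<longlongrightarrow> \<sigma>^2 / 2) at_top"
    by real_asymp
  have ev: "eventually (\<lambda>d. \<sigma>^2 / 2 * ((d - (t - \<mu>)) / d)^2
      = integral\<^sup>L (three_point \<mu> d (\<sigma>^2 / d^2)) (\<lambda>x. pos_part (x - t)^2)) at_top"
    using eventually_ge_at_top[of "max \<sigma> (t - \<mu>)"]
  proof eventually_elim
    case (elim d)
    then have d: "0 < d" "t \<le> \<mu> + d"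
      using assms(2) by auto
    have "\<sigma>^2 \<le> d^2"
      using elim assms(1) by (simp add: power_mono)
    then have p: "0 \<le> \<sigma>^2 / d^2" "\<sigma>^2 / d^2 \<le> 1"
      using d(1) by (simp_all add: divide_le_eq_1)
    have "integral\<^sup>L (three_point \<mu> d (\<sigma>^2 / d^2)) (\<lambda>x. pos_part (x - t)^2)
        = \<sigma>^2 / d^2 / 2 * pos_part (\<mu> - d - t)^2 + (1 - \<sigma>^2 / d^2) * pos_part (\<mu> - t)^2
          + \<sigma>^2 / d^2 / 2 * pos_part (\<mu> + d - t)^2"
      using has_bochner_integral_three_point[OF d(1) p, of "\<lambda>x. pos_part (x - t)^2" \<mu>]
      by (simp add: has_bochner_integral_iff pos_part_def)
    also have "\<dots> = \<sigma>^2 / d^2 / 2 * (d - (t - \<mu>))^2"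
      using assms(2) d by (simp add: pos_part_def)
    also have "\<dots> = \<sigma>^2 / 2 * ((d - (t - \<mu>)) / d)^2"
      by (simp add: power_divide)
    finally show ?case ..
  qed
  have "sq_excess_sup \<mu> \<sigma> t = \<sigma>^2 / 2"
    using assms by (simp add: sq_excess_sup_def)
  with Lim_transform_eventually[OF lim ev] show ?thesis
    by (simp only:)
qed


lemma eventually_three_point_in_L_S:
  assumes "0 < \<sigma>"
  shows "eventually (\<lambda>d. three_point \<mu> d (\<sigma>^2 / d^2) \<in> L_S \<mu> \<sigma>) at_top"
  using eventually_ge_at_top[of \<sigma>]
proof eventually_elim
  case (elim d)
  with assms show ?case
    by (intro three_point_in_L_S) (auto simp: divide_le_eq_1 power_mono)
qed

theorem theorem1:
  fixes \<mu> \<sigma> t :: real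
  assumes "\<sigma> > 0"
  shows "(SUP F\<in>L_S \<mu> \<sigma>. integral\<^sup>L F (\<lambda>x. (pos_part (x - t))^2)) =
    (if t \<le> \<mu> - \<sigma> then \<sigma>^2 + (t - \<mu>)^2
     else if t \<le> \<mu> then (\<mu> - t + \<sigma>)^2 / 2
     else \<sigma>^2 / 2)"
proof -
  let ?E = "\<lambda>F. integral\<^sup>L F (\<lambda>x. pos_part (x - t)^2)"
  have upper: "?E F \<le> sq_excess_sup \<mu> \<sigma> t" if "F \<in> L_S \<mu> \<sigma>" for F
    using that assms by (rule integral_pos_part_sq_le_sq_excess_sup)
  have two_point: "three_point \<mu> \<sigma> 1 \<in> L_S \<mu> \<sigma>"
    using assms by (intro three_point_in_L_S) auto
  have bdd: "bdd_above (?E ` L_S \<mu> \<sigma>)"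
    using upper by (intro bdd_aboveI2)
  have "sq_excess_sup \<mu> \<sigma> t \<le> (SUP F\<in>L_S \<mu> \<sigma>. ?E F)"
  proof (cases "t \<le> \<mu>")
    case True
    then show ?thesis
      using cSUP_upper[OF two_point bdd] integral_pos_part_sq_two_point[OF assms] by simp
  next
    case False
    have "eventually (\<lambda>d. ?E (three_point \<mu> d (\<sigma>^2 / d^2)) \<le> (SUP F\<in>L_S \<mu> \<sigma>. ?E F)) at_top"
      using eventually_three_point_in_L_S[OF assms] by eventually_elim (rule cSUP_upper[OF _ bdd])
    with False assms show ?thesis
      by (intro tendsto_upperbound[OF integral_pos_part_sq_three_point_tendsto]) auto
  qed
  with upper show ?thesis
    using two_point by (intro antisym cSUP_least) (auto simp: sq_excess_sup_def)
qed

end
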